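(* Let $n\ge2$ and let $A\subset\mathbb R^n$ be closed with $\mathrm{Outrad}(A)<1$. Let $A_0=A$ and for $j=0,1,2,\dots$ define \[ A_{j+1}=\bigcup\{\mathrm{conv}_c(\{x,y\}):x,y\in A_j\}. \] Then $A_j\subseteq\mathrm{conv}_c(A)$ for all $j$, and $A_j=\mathrm{conv}_c(A)$ whenever $2^j>n$.
   Context: $B(x,r)$ is the closed Euclidean ball. For $A\subseteq\mathbb R^n$, $A^c=\bigcap_{x\in A}B(x,1)$ (with $\emptyset^c=\mathbb R^n$), and the $c$-hull is $\mathrm{conv}_c(A)=A^{cc}$. $\mathrm{Outrad}(A)$ is the infimum of $R$ such that $A\subseteq B(z,R)$ for some $z$. *)

theory Defs
  imports "HOL-Analysis.Analysis"
begin

text \<open>c-dual: intersection of closed unit balls centred at points of A (empty intersection = UNIV).\<close>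
definition cdual :: "'a::euclidean_space set \<Rightarrow> 'a set" where
  "cdual A = (\<Inter>x\<in>A. cball x 1)"

definition conv_c :: "'a::euclidean_space set \<Rightarrow> 'a set" where
  "conv_c A = cdual (cdual A)"

definition Outrad :: "'a::euclidean_space set \<Rightarrow> real" where
  "Outrad A = Inf {R. \<exists>z. A \<subseteq> cball z R}"

primrec cseq :: "'a::euclidean_space set \<Rightarrow> nat \<Rightarrow> 'a set" where
  "cseq A 0 = A"
| "cseq A (Suc j) = (\<Union>x\<in>cseq A j. \<Union>y\<in>cseq A j. conv_c {x, y})"

end

theory Submission
  imports Defs
begin

(* The inclusions A_j \<subseteq> conv_c A follow from monotonicity and idempotence of the c-hull.
   For the converse put A in a ball of radius r < 1. Inversion at a point p maps the unit balls
   whose boundary passes through p onto the half-spaces {y. w \<bullet> y > 1/2}, |w| = 1; hence a point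
   p \<notin> A lies in conv_c A iff the convex hull of the inverted set meets the ball of radius 1/2,
   and Caratheodory's theorem gives p \<in> conv_c F for some F \<subseteq> A with at most n + 1 points.
   The core step replaces two points a, b of such a set by one point of conv_c {a, b}: the inverse
   of conv_c {a, b} contains a curve from the inverse of a to that of b (the image of an arc of a
   sphere of radius \<ge> 1 through a and b, or of the segment [a, b]) lying on the far side of the
   inverted chord, so by the intermediate value theorem it crosses every ray that leaves the chord
   away from the small ball. Consequently conv_c (S \<union> T) is covered by the sets conv_c {x, y} with
   x \<in> conv_c S, y \<in> conv_c T, and splitting F in halves j times gives conv_c F \<subseteq> A_j once
   |F| \<le> 2^j. An unbounded A contains two points at distance > 2, whose c-hull is everything. *)

section \<open>Basic properties of c-hulls\<close>

lemma mem_cdual: "c \<in> cdual A \<longleftrightarrow> (\<forall>a\<in>A. dist a c \<le> 1)"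
  by (auto simp: cdual_def)

lemma mem_conv_c: "x \<in> conv_c A \<longleftrightarrow> (\<forall>c. (\<forall>a\<in>A. dist a c \<le> 1) \<longrightarrow> dist c x \<le> 1)"
  by (auto simp: conv_c_def cdual_def)

lemma cdual_antimono: "A \<subseteq> B \<Longrightarrow> cdual B \<subseteq> cdual A"
  by (auto simp: cdual_def)

lemma conv_c_mono: "A \<subseteq> B \<Longrightarrow> conv_c A \<subseteq> conv_c B"
  unfolding conv_c_def by (intro cdual_antimono)

lemma subset_conv_c: "A \<subseteq> conv_c A"
  by (auto simp: mem_conv_c) (metis dist_commute)

lemma cdual_conv_c: "cdual (conv_c A) = cdual A"
proof
  show "cdual (conv_c A) \<subseteq> cdual A"
    by (rule cdual_antimono[OF subset_conv_c])
  show "cdual A \<subseteq> cdual (conv_c A)"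
    by (auto simp: mem_cdual mem_conv_c) (metis dist_commute)
qed

lemma conv_c_idem: "conv_c (conv_c A) = conv_c A"
  by (simp add: conv_c_def cdual_conv_c[unfolded conv_c_def])

lemma conv_c_subset: "A \<subseteq> conv_c B \<Longrightarrow> conv_c A \<subseteq> conv_c B"
  by (metis conv_c_mono conv_c_idem)

lemma convex_conv_c: "convex (conv_c A)"
  unfolding conv_c_def cdual_def by (intro convex_INT) auto

lemma convex_hull_subset_conv_c: "convex hull A \<subseteq> conv_c A"
  by (intro hull_minimal subset_conv_c convex_conv_c)

lemma closed_segment_subset_conv_c: "closed_segment a b \<subseteq> conv_c {a, b}"
  using convex_hull_subset_conv_c by (simp add: segment_convex_hull)

lemma conv_c_empty: "conv_c {} = {}"
proof -
  have "x \<notin> conv_c {}" for x :: 'a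
  proof
    assume x: "x \<in> conv_c {}"
    obtain w :: 'a where "norm w = 2"
      by (metis vector_choose_size zero_le_numeral)
    moreover have "dist (x + w) x \<le> 1"
      using x by (simp add: mem_conv_c)
    ultimately show False
      by (simp add: dist_norm)
  qed
  then show ?thesis
    by blast
qed

lemma conv_c_subset_cball:
  assumes "r < 1" and A: "A \<subseteq> cball z r"
  shows "conv_c A \<subseteq> cball z r"
proof
  fix x assume x: "x \<in> conv_c A"
  show "x \<in> cball z r"
  proof (rule ccontr)
    assume "x \<notin> cball z r"
    then have far: "dist x z > r" and "x \<noteq> z"
      using A x by (auto simp: dist_commute conv_c_empty)
    define w where "w = (1 / norm (x - z)) *\<^sub>R (x - z)"
    define c where "c = z - (1 - r) *\<^sub>R w"
    have w: "norm w = 1"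
      using \<open>x \<noteq> z\<close> by (simp add: w_def)
    have "dist a c \<le> 1" if "a \<in> A" for a
    proof -
      have "dist a c \<le> dist a z + dist z c"
        by (rule dist_triangle)
      also have "\<dots> \<le> r + (1 - r)"
        using A that w \<open>r < 1\<close> by (intro add_mono) (auto simp: c_def dist_commute[of a])
      finally show ?thesis
        by simp
    qed
    then have "dist c x \<le> 1"
      using x by (auto simp: mem_conv_c)
    have "x - z = norm (x - z) *\<^sub>R w"
      using \<open>x \<noteq> z\<close> by (simp add: w_def)
    then have "x - c = (norm (x - z) + (1 - r)) *\<^sub>R w"
      by (simp add: c_def scaleR_add_left algebra_simps)
    then have "dist c x = dist x z + (1 - r)"
      using w far \<open>r < 1\<close> by (simp add: dist_norm norm_minus_commute[of c])
    with \<open>dist c x \<le> 1\<close> far show False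
      by simp
  qed
qed

lemma conv_c_singleton: "conv_c {a} = {a}"
  using conv_c_subset_cball[of 0 "{a}" a] subset_conv_c[of "{a}"] by auto

lemma conv_c_eq_UNIV_if_far:
  assumes "dist a b > 2"
  shows "conv_c {a, b} = UNIV"
proof -
  have "c \<notin> cdual {a, b}" for c
    using assms dist_triangle3[of a b c] by (auto simp: mem_cdual dist_commute)
  then have "cdual {a, b} = {}"
    by blast
  then show ?thesis
    by (simp add: conv_c_def cdual_def)
qed

lemma conv_c_translation: "conv_c ((\<lambda>a. a - v) ` A) = (\<lambda>a. a - v) ` conv_c A"
proof -
  have shift: "(\<forall>a\<in>A. dist (a - v) c \<le> 1) \<longleftrightarrow> (\<forall>a\<in>A. dist a (c + v) \<le> 1)" for c
    by (simp add: dist_norm algebra_simps)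
  have "y \<in> conv_c ((\<lambda>a. a - v) ` A) \<longleftrightarrow> y + v \<in> conv_c A" for y
    unfolding mem_conv_c ball_simps shift
    by (metis (no_types, lifting) add_diff_cancel dist_add_cancel2 diff_add_cancel)
  then show ?thesis
    by force
qed

lemma cseq_subset_Suc: "cseq A j \<subseteq> cseq A (Suc j)"
proof
  fix x assume "x \<in> cseq A j"
  moreover have "x \<in> conv_c {x, x}"
    by (simp add: conv_c_singleton)
  ultimately show "x \<in> cseq A (Suc j)"
    by (simp only: cseq.simps) blast
qed

lemma cseq_mono: "j \<le> k \<Longrightarrow> cseq A j \<subseteq> cseq A k"
  using lift_Suc_mono_le[of "cseq A", OF cseq_subset_Suc] by blast

lemma cseq_subset_conv_c: "cseq A j \<subseteq> conv_c A"
proof (induction j)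
  case 0
  show ?case
    using subset_conv_c by simp
next
  case (Suc j)
  then show ?case
    using conv_c_subset[of "{x, y}" A for x y] by fastforce
qed

section \<open>Inversion\<close>

lemma power2_norm_diff:
  fixes x y :: "'a::real_inner"
  shows "norm (x - y)^2 = norm x^2 - 2 * (x \<bullet> y) + norm y^2"
  by (simp add: power2_norm_eq_inner inner_diff_left inner_diff_right inner_commute)

definition inversion :: "'a::real_inner \<Rightarrow> 'a \<Rightarrow> 'a" where
  "inversion p x = (1 / norm (x - p)^2) *\<^sub>R (x - p)"

lemma inversion_shift: "inversion p x = inversion 0 (x - p)"
  by (simp add: inversion_def)

lemma norm_inversion: "norm (inversion p x) = 1 / norm (x - p)"
  by (simp add: inversion_def power2_eq_square)

lemma inversion_eq_0_iff [simp]: "inversion p x = 0 \<longleftrightarrow> x = p"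
  by (simp add: inversion_def)

lemma inversion_0_scaleR: "inversion 0 (c *\<^sub>R y) = (1 / c) *\<^sub>R inversion 0 y"
proof -
  have n: "norm (c *\<^sub>R y)^2 = c^2 * norm y^2"
    by (simp add: power_mult_distrib)
  have "1 / (c^2 * norm y^2) * c = (1 / c) * (1 / norm y^2)"
    by (cases "c = 0") (simp_all add: power2_eq_square)
  then show ?thesis
    unfolding inversion_def diff_zero n by simp
qed

lemma inversion_inversion_0 [simp]: "inversion 0 (inversion 0 y) = y"
  by (cases "y = 0") (simp_all add: inversion_def power2_eq_square)

lemma inj_inversion: "inj (inversion p)"
  by (rule injI) (metis inversion_shift inversion_inversion_0 diff_add_cancel)

lemma continuous_on_inversion: "p \<notin> S \<Longrightarrow> continuous_on S (inversion p)"
  unfolding inversion_def by (intro continuous_intros) auto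

lemma inner_inversion_gt_half_iff:
  assumes "norm w = 1" and "x \<noteq> p"
  shows "w \<bullet> inversion p x > 1/2 \<longleftrightarrow> dist x (p + w) < 1"
proof -
  have pos: "norm (x - p)^2 > 0"
    using assms(2) by simp
  have "dist x (p + w)^2 = norm (x - p)^2 - 2 * (w \<bullet> (x - p)) + 1"
    using power2_norm_diff[of "x - p" w] assms(1) by (simp add: dist_norm diff_diff_eq inner_commute)
  moreover have "dist x (p + w) < 1 \<longleftrightarrow> dist x (p + w)^2 < 1"
    by (simp add: power_less_one_iff)
  ultimately have "dist x (p + w) < 1 \<longleftrightarrow> norm (x - p)^2 < 2 * (w \<bullet> (x - p))"
    by linarith
  also have "\<dots> \<longleftrightarrow> (w \<bullet> (x - p)) / norm (x - p)^2 > 1/2"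
    using pos by (simp add: field_simps)
  finally show ?thesis
    by (simp add: inversion_def)
qed

lemma norm_inversion_minus_eq_iff:
  assumes "y \<noteq> 0"
  shows "norm (inversion 0 y - c) = norm c \<longleftrightarrow> y \<bullet> c = 1/2"
proof -
  have pos: "norm y ^ 2 > 0"
    using assms by simp
  have "norm (inversion 0 y)^2 = 1 / norm y ^ 2"
    by (simp add: norm_inversion power_one_over)
  moreover have "inversion 0 y \<bullet> c = (y \<bullet> c) / norm y ^ 2"
    by (simp add: inversion_def)
  ultimately have diff: "norm (inversion 0 y - c)^2 - norm c^2 = (1 - 2 * (y \<bullet> c)) / norm y ^ 2"
    unfolding power2_norm_diff by (simp add: diff_divide_distrib)
  have "norm (inversion 0 y - c) = norm c \<longleftrightarrow> norm (inversion 0 y - c)^2 = norm c^2"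
    by (simp add: power2_eq_iff_nonneg)
  also have "\<dots> \<longleftrightarrow> y \<bullet> c = 1/2"
    using diff pos by (auto simp: field_simps)
  finally show ?thesis .
qed

section \<open>The inversion criterion for membership in a c-hull\<close>

lemma halfspace_separating_cball:
  fixes H :: "'a::euclidean_space set"
  assumes "closed H" "convex H" "H \<noteq> {}" "0 \<le> \<rho>" "H \<inter> cball 0 \<rho> = {}"
  obtains w where "norm w = 1" "\<forall>y\<in>H. w \<bullet> y > \<rho>"
proof -
  obtain y0 where y0: "y0 \<in> H" and closest: "\<And>y. y \<in> H \<Longrightarrow> dist 0 y0 \<le> dist 0 y"
    using distance_attains_inf[OF assms(1,3), of 0] by blast
  have far: "norm y0 > \<rho>"
    using y0 assms(5) by (force simp: not_le)
  then have pos: "norm y0 > 0"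
    using assms(4) by linarith
  define w where "w = (1 / norm y0) *\<^sub>R y0"
  have "w \<bullet> y > \<rho>" if "y \<in> H" for y
  proof -
    have "(0 - y0) \<bullet> (y - y0) \<le> 0"
      using any_closest_point_dot[OF assms(2,1) y0 that] closest by blast
    then have "norm y0 * norm y0 \<le> y0 \<bullet> y"
      by (simp add: inner_diff_right power2_norm_eq_inner[symmetric] power2_eq_square)
    then have "norm y0 \<le> w \<bullet> y"
      using pos by (simp add: w_def pos_le_divide_eq)
    then show ?thesis
      using far by simp
  qed
  moreover have "norm w = 1"
    using pos by (simp add: w_def)
  ultimately show ?thesis
    using that by blast
qed

lemma not_mem_conv_c_if_subset_ball:
  assumes "compact S" "S \<subseteq> ball c 1" "dist c p = 1"
  shows "p \<notin> conv_c S"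
proof (cases "S = {}")
  case True
  then show ?thesis
    by (simp add: conv_c_empty)
next
  case False
  have "continuous_on S (\<lambda>s. dist s c)"
    by (intro continuous_intros)
  then obtain s0 where "s0 \<in> S" and s0: "\<And>s. s \<in> S \<Longrightarrow> dist s c \<le> dist s0 c"
    using continuous_attains_sup[OF assms(1) False] by blast
  define M where "M = dist s0 c"
  have "M < 1"
    using \<open>s0 \<in> S\<close> assms(2) by (auto simp: M_def dist_commute)
  define c' where "c' = c + (1 - M) *\<^sub>R (c - p)"
  have "dist s c' \<le> 1" if "s \<in> S" for s
  proof -
    have "dist s c' \<le> dist s c + dist c c'"
      by (rule dist_triangle)
    also have "\<dots> \<le> M + (1 - M)"
      using s0[OF that] \<open>M < 1\<close> assms(3) by (intro add_mono) (auto simp: M_def c'_def dist_norm)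
    finally show ?thesis
      by simp
  qed
  moreover have "dist c' p > 1"
  proof -
    have "c' - p = (2 - M) *\<^sub>R (c - p)"
      by (simp add: c'_def algebra_simps scaleR_2)
    then show ?thesis
      using assms(3) \<open>M < 1\<close> by (simp add: dist_norm)
  qed
  ultimately show ?thesis
    by (auto simp: mem_conv_c not_le intro!: exI[of _ c'])
qed

lemma inversion_hull_meets_cball_half:
  assumes "compact S" "p \<notin> S" "p \<in> conv_c S"
  shows "\<exists>y\<in>convex hull (inversion p ` S). norm y \<le> 1/2"
proof (rule ccontr)
  let ?H = "convex hull (inversion p ` S)"
  assume "\<not> ?thesis"
  then have disjoint: "?H \<inter> cball 0 (1/2) = {}"
    by auto
  have "S \<noteq> {}"
    using assms(3) by (auto simp: conv_c_empty)
  moreover have "compact ?H"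
    using assms(1,2) by (intro compact_convex_hull compact_continuous_image continuous_on_inversion)
  ultimately obtain w where w: "norm w = 1" and half: "\<forall>y\<in>?H. w \<bullet> y > 1/2"
    using halfspace_separating_cball[OF compact_imp_closed convex_convex_hull _ _ disjoint] by auto
  have "S \<subseteq> ball (p + w) 1"
  proof
    fix s assume "s \<in> S"
    then have "inversion p s \<in> ?H" and "s \<noteq> p"
      using assms(2) by (auto intro: hull_inc)
    then have "dist s (p + w) < 1"
      using half inner_inversion_gt_half_iff[OF w] by blast
    then show "s \<in> ball (p + w) 1"
      by (simp add: dist_commute)
  qed
  moreover have "dist (p + w) p = 1"
    using w by (simp add: dist_norm)
  ultimately show False
    using not_mem_conv_c_if_subset_ball[OF assms(1)] assms(3) by blast
qed

lemma obtain_unit_ball_touching: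
  assumes "r < 1" "S \<subseteq> cball z r" "dist p z < 1" "p \<notin> conv_c S"
  obtains c where "S \<subseteq> ball c 1" "dist c p = 1"
proof -
  obtain c0 where c0S: "\<forall>a\<in>S. dist a c0 \<le> 1" and "dist c0 p > 1"
    using assms(4) by (auto simp: mem_conv_c not_le)
  define c where "c t = (1 - t) *\<^sub>R c0 + t *\<^sub>R z" for t
  have "continuous_on {0..1} (\<lambda>t. dist p (c t))"
    unfolding c_def by (intro continuous_intros)
  moreover have "dist p (c 0) > 1" "dist p (c 1) < 1"
    using \<open>dist c0 p > 1\<close> assms(3) by (simp_all add: c_def dist_commute)
  ultimately obtain t where t: "0 \<le> t" "t \<le> 1" "dist p (c t) = 1"
    using IVT2'[of "\<lambda>t. dist p (c t)" 1 1 0] by force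
  have "t > 0"
    using t \<open>dist p (c 0) > 1\<close> by (cases "t = 0") auto
  have "dist s (c t) < 1" if "s \<in> S" for s
  proof -
    have "s - c t = (1 - t) *\<^sub>R (s - c0) + t *\<^sub>R (s - z)"
      by (simp add: c_def algebra_simps)
    then have "norm (s - c t) \<le> norm ((1 - t) *\<^sub>R (s - c0)) + norm (t *\<^sub>R (s - z))"
      by (metis norm_triangle_ineq)
    also have "\<dots> = (1 - t) * dist s c0 + t * dist s z"
      using t by (simp add: dist_norm)
    also have "\<dots> \<le> (1 - t) * 1 + t * r"
      using c0S assms(2) that t by (intro add_mono mult_left_mono) (auto simp: dist_commute)
    also have "\<dots> < 1"
      using \<open>t > 0\<close> assms(1) by (simp add: algebra_simps)
    finally show ?thesis
      by (simp add: dist_norm)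
  qed
  then have "S \<subseteq> ball (c t) 1"
    by (auto simp: dist_commute)
  then show ?thesis
    using that t(3) by (simp add: dist_commute)
qed

lemma mem_conv_c_if_inversion_hull:
  assumes "r < 1" "S \<subseteq> cball z r" "dist p z < 1" "p \<notin> S"
    and "y \<in> convex hull (inversion p ` S)" "norm y \<le> 1/2"
  shows "p \<in> conv_c S"
proof (rule ccontr)
  assume "p \<notin> conv_c S"
  then obtain c where c: "S \<subseteq> ball c 1" "dist c p = 1"
    using obtain_unit_ball_touching assms(1-3) by blast
  define w where "w = c - p"
  have w: "norm w = 1"
    using c(2) by (simp add: w_def dist_norm)
  have "w \<bullet> inversion p s > 1/2" if "s \<in> S" for s
  proof -
    have "dist c s < 1"
      using c(1) that by auto
    then have "dist s (p + w) < 1"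
      by (simp add: w_def dist_commute)
    moreover have "s \<noteq> p"
      using assms(4) that by blast
    ultimately show ?thesis
      using inner_inversion_gt_half_iff[OF w] by blast
  qed
  then have "inversion p ` S \<subseteq> {x. w \<bullet> x > 1/2}"
    by blast
  then have "w \<bullet> y > 1/2"
    using assms(5) convex_halfspace_gt[of "1/2" w] hull_minimal by blast
  moreover have "w \<bullet> y \<le> 1/2"
    using norm_cauchy_schwarz[of w y] w assms(6) by simp
  ultimately show False
    by simp
qed

section \<open>Spherical arcs in c-hulls of two points\<close>

lemma norm_conic_comb_sphere_le:
  assumes "norm (a - z) = R" "norm (b - z) = R" "0 \<le> \<mu>a" "0 \<le> \<mu>b"
  shows "norm (\<mu>a *\<^sub>R (a - z) + \<mu>b *\<^sub>R (b - z)) \<le> (\<mu>a + \<mu>b) * R"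
proof -
  have "norm (\<mu>a *\<^sub>R (a - z) + \<mu>b *\<^sub>R (b - z)) \<le> norm (\<mu>a *\<^sub>R (a - z)) + norm (\<mu>b *\<^sub>R (b - z))"
    by (rule norm_triangle_ineq)
  also have "\<dots> = (\<mu>a + \<mu>b) * R"
    using assms by (simp add: distrib_right)
  finally show ?thesis .
qed

lemma convex_comb_sphere_nonzero:
  assumes a: "norm (a - z) = R" and b: "norm (b - z) = R" and "dist a b < 2 * R"
    and "0 \<le> s" "s \<le> 1"
  shows "(1 - s) *\<^sub>R (a - z) + s *\<^sub>R (b - z) \<noteq> 0"
proof
  assume v: "(1 - s) *\<^sub>R (a - z) + s *\<^sub>R (b - z) = 0"
  then have "(1 - s) *\<^sub>R (a - z) = - (s *\<^sub>R (b - z))"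
    by (simp add: eq_neg_iff_add_eq_0)
  then have "(1 - s) * R = s * R"
    using assms(4,5) a b by (metis norm_minus_cancel norm_scaleR abs_of_nonneg diff_ge_0_iff_ge)
  moreover have "R > 0"
    using \<open>dist a b < 2 * R\<close> zero_le_dist[of a b] by linarith
  ultimately have "s = 1/2"
    by simp
  with v have "(1/2) *\<^sub>R ((a - z) + (b - z)) = 0"
    by (simp add: scaleR_add_right)
  then have "(a - z) + (b - z) = 0"
    by simp
  then have "b - z = - (a - z)"
    by (simp only: add_eq_0_iff)
  have "a - b = (a - z) - (b - z)"
    by simp
  also have "\<dots> = 2 *\<^sub>R (a - z)"
    using \<open>b - z = - (a - z)\<close> by (simp add: scaleR_2)
  finally have "dist a b = 2 * R"
    using a by (simp add: dist_norm)
  with \<open>dist a b < 2 * R\<close> show False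
    by simp
qed

lemma inner_ge_if_on_sphere:
  assumes "norm (x - z) = R" "dist x c \<le> 1"
  shows "R^2 - 1 + norm (c - z)^2 \<le> 2 * ((x - z) \<bullet> (c - z))"
proof -
  have "norm ((x - z) - (c - z))^2 \<le> 1"
    using assms(2) by (simp add: dist_norm power_le_one)
  then show ?thesis
    unfolding power2_norm_diff assms(1) by simp
qed

lemma sphere_point_in_conv_c_pair:
  assumes R: "1 \<le> R" and a: "norm (a - z) = R" and b: "norm (b - z) = R"
    and "0 \<le> \<mu>a" "0 \<le> \<mu>b" and v: "v = \<mu>a *\<^sub>R (a - z) + \<mu>b *\<^sub>R (b - z)" and "v \<noteq> 0"
  shows "z + (R / norm v) *\<^sub>R v \<in> conv_c {a, b}"
  unfolding mem_conv_c
proof (intro allI impI)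
  fix c assume "\<forall>x\<in>{a, b}. dist x c \<le> 1"
  then have ac: "dist a c \<le> 1" and bc: "dist b c \<le> 1"
    by auto
  define d where "d = c - z"
  define Q where "Q = R^2 - 1 + norm d^2"
  have "Q \<ge> 0"
    using R by (simp add: Q_def one_le_power)
  have "(\<mu>a + \<mu>b) * Q = \<mu>a * Q + \<mu>b * Q"
    by (simp add: algebra_simps)
  also have "\<dots> \<le> \<mu>a * (2 * ((a - z) \<bullet> d)) + \<mu>b * (2 * ((b - z) \<bullet> d))"
    using inner_ge_if_on_sphere[OF a ac] inner_ge_if_on_sphere[OF b bc] assms(4,5)
    unfolding Q_def d_def by (intro add_mono mult_left_mono)
  also have "\<dots> = 2 * (v \<bullet> d)"
    by (simp add: v inner_add_left algebra_simps)
  finally have Q_le: "(\<mu>a + \<mu>b) * Q \<le> 2 * (v \<bullet> d)" .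
  have "norm v * Q \<le> (\<mu>a + \<mu>b) * R * Q"
    using norm_conic_comb_sphere_le[OF a b assms(4,5)] \<open>Q \<ge> 0\<close> unfolding v by (rule mult_right_mono)
  also have "\<dots> = R * ((\<mu>a + \<mu>b) * Q)"
    by (simp add: algebra_simps)
  also have "\<dots> \<le> R * (2 * (v \<bullet> d))"
    using R Q_le by (intro mult_left_mono) auto
  finally have key: "Q \<le> 2 * (R / norm v) * (v \<bullet> d)"
    using \<open>v \<noteq> 0\<close> by (simp add: field_simps)
  have "norm ((R / norm v) *\<^sub>R v) = R"
    using R \<open>v \<noteq> 0\<close> by simp
  then have "norm ((R / norm v) *\<^sub>R v - d)^2 \<le> 1"
    using key unfolding power2_norm_diff by (simp add: Q_def)
  then show "dist c (z + (R / norm v) *\<^sub>R v) \<le> 1"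
    by (simp add: dist_norm d_def power_le_one_iff norm_minus_commute diff_diff_eq)
qed

lemma obtain_sphere_arc:
  assumes R: "1 \<le> R" and a: "norm (a - z) = R" and b: "norm (b - z) = R" and "dist a b < 2"
  obtains K where "continuous_on {0..1} K" "K 0 = 1" "K 1 = 1"
    and "\<And>s. s \<in> {0..1} \<Longrightarrow> 1 \<le> K s"
    and "\<And>s. s \<in> {0..1} \<Longrightarrow> (1 - K s) *\<^sub>R z + (K s * (1 - s)) *\<^sub>R a + (K s * s) *\<^sub>R b \<in> conv_c {a, b}"
    and "\<And>s. s \<in> {0..1} \<Longrightarrow> norm ((1 - K s) *\<^sub>R z + (K s * (1 - s)) *\<^sub>R a + (K s * s) *\<^sub>R b - z) = R"
proof -
  define v where "v s = (1 - s) *\<^sub>R (a - z) + s *\<^sub>R (b - z)" for s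
  define K where "K s = R / norm (v s)" for s
  have curve: "z + K s *\<^sub>R v s = (1 - K s) *\<^sub>R z + (K s * (1 - s)) *\<^sub>R a + (K s * s) *\<^sub>R b" for s
    by (simp add: v_def algebra_simps)
  have norm_v: "norm (v s) \<le> R" if "s \<in> {0..1}" for s
    using norm_conic_comb_sphere_le[OF a b, of "1 - s" s] that by (simp add: v_def)
  have v_nz: "v s \<noteq> 0" if "s \<in> {0..1}" for s
    using convex_comb_sphere_nonzero[OF a b] \<open>dist a b < 2\<close> R that by (simp add: v_def)
  show ?thesis
  proof (rule that)
    show "continuous_on {0..1} K"
      unfolding K_def v_def using v_nz by (intro continuous_intros) (auto simp: v_def)
    show "K 0 = 1" "K 1 = 1"
      using a b R by (simp_all add: K_def v_def)
    show "1 \<le> K s" if "s \<in> {0..1}" for s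
      using norm_v[OF that] v_nz[OF that] by (simp add: K_def)
    show "(1 - K s) *\<^sub>R z + (K s * (1 - s)) *\<^sub>R a + (K s * s) *\<^sub>R b \<in> conv_c {a, b}"
      if "s \<in> {0..1}" for s
      unfolding curve[symmetric] unfolding K_def
      using sphere_point_in_conv_c_pair[OF R a b _ _ v_def v_nz[OF that]] that by simp
    show "norm ((1 - K s) *\<^sub>R z + (K s * (1 - s)) *\<^sub>R a + (K s * s) *\<^sub>R b - z) = R"
      if "s \<in> {0..1}" for s
      unfolding curve[symmetric] unfolding K_def using v_nz[OF that] R by simp
  qed
qed

section \<open>Replacing two points by one\<close>

lemma norm_convex_comb_power2_le:
  fixes a b :: "'a::real_inner"
  assumes "0 \<le> s" "s \<le> 1"
  shows "norm ((1 - s) *\<^sub>R a + s *\<^sub>R b)^2 \<le> (1 - s) * norm a^2 + s * norm b^2"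
proof -
  have "(1 - s) * norm a^2 + s * norm b^2 - norm ((1 - s) *\<^sub>R a + s *\<^sub>R b)^2
      = s * (1 - s) * norm (a - b)^2"
    unfolding power2_norm_eq_inner
    by (simp add: inner_add_left inner_add_right inner_diff_left inner_diff_right inner_commute algebra_simps)
  moreover have "s * (1 - s) * norm (a - b)^2 \<ge> 0"
    using assms by simp
  ultimately show ?thesis
    by simp
qed

lemma obtain_span2_inner:
  fixes y1 y2 :: "'a::real_inner" and c1 c2 :: real
  assumes "(y1 \<bullet> y2)^2 \<noteq> (y1 \<bullet> y1) * (y2 \<bullet> y2)"
  obtains \<alpha> \<beta> where "y1 \<bullet> (\<alpha> *\<^sub>R y1 + \<beta> *\<^sub>R y2) = c1" "y2 \<bullet> (\<alpha> *\<^sub>R y1 + \<beta> *\<^sub>R y2) = c2"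
proof -
  define N1 N2 g where "N1 = y1 \<bullet> y1" and "N2 = y2 \<bullet> y2" and "g = y1 \<bullet> y2"
  define D where "D = N1 * N2 - g^2"
  have "D \<noteq> 0"
    using assms by (simp add: D_def N1_def N2_def g_def)
  define \<alpha> where "\<alpha> = (c1 * N2 - c2 * g) / D"
  define \<beta> where "\<beta> = (c2 * N1 - c1 * g) / D"
  have "y1 \<bullet> (\<alpha> *\<^sub>R y1 + \<beta> *\<^sub>R y2) = ((c1 * N2 - c2 * g) * N1 + (c2 * N1 - c1 * g) * g) / D"
    by (simp add: \<alpha>_def \<beta>_def N1_def g_def inner_add_right add_divide_distrib)
  also have "\<dots> = c1 * D / D"
    by (simp add: D_def algebra_simps power2_eq_square)
  finally have 1: "y1 \<bullet> (\<alpha> *\<^sub>R y1 + \<beta> *\<^sub>R y2) = c1"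
    using \<open>D \<noteq> 0\<close> by simp
  have "y2 \<bullet> (\<alpha> *\<^sub>R y1 + \<beta> *\<^sub>R y2) = ((c1 * N2 - c2 * g) * g + (c2 * N1 - c1 * g) * N2) / D"
    by (simp add: \<alpha>_def \<beta>_def N2_def g_def inner_add_right inner_commute add_divide_distrib)
  also have "\<dots> = c2 * D / D"
    by (simp add: D_def algebra_simps power2_eq_square)
  finally have 2: "y2 \<bullet> (\<alpha> *\<^sub>R y1 + \<beta> *\<^sub>R y2) = c2"
    using \<open>D \<noteq> 0\<close> by simp
  from 1 2 show ?thesis
    by (rule that)
qed

lemma obtain_orthogonal_decomposition2:
  fixes y1 y2 m :: "'a::real_inner"
  assumes "(y1 \<bullet> y2)^2 \<noteq> (y1 \<bullet> y1) * (y2 \<bullet> y2)"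
  obtains c1 c2 \<eta> where "m = c1 *\<^sub>R y1 + c2 *\<^sub>R y2 + \<eta>" "y1 \<bullet> \<eta> = 0" "y2 \<bullet> \<eta> = 0"
proof -
  obtain c1 c2 where "y1 \<bullet> (c1 *\<^sub>R y1 + c2 *\<^sub>R y2) = y1 \<bullet> m" "y2 \<bullet> (c1 *\<^sub>R y1 + c2 *\<^sub>R y2) = y2 \<bullet> m"
    using obtain_span2_inner[OF assms, of "y1 \<bullet> m" "y2 \<bullet> m"] by blast
  then show ?thesis
    using that[of c1 c2 "m - (c1 *\<^sub>R y1 + c2 *\<^sub>R y2)"] by (simp add: inner_diff_right)
qed

lemma obtain_collinear_if_inner_power2_eq:
  fixes x y :: "'a::real_inner"
  assumes "y \<noteq> 0" "(x \<bullet> y)^2 = (x \<bullet> x) * (y \<bullet> y)"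
  obtains k where "x = k *\<^sub>R y"
proof -
  have "\<bar>x \<bullet> y\<bar>^2 = (norm x * norm y)^2"
    using assms(2) by (simp add: power_mult_distrib power2_norm_eq_inner)
  then have "\<bar>x \<bullet> y\<bar> = norm x * norm y"
    by (rule power2_eq_imp_eq) simp_all
  then have "norm y *\<^sub>R x = norm x *\<^sub>R y \<or> norm y *\<^sub>R x = (- norm x) *\<^sub>R y"
    using norm_cauchy_schwarz_abs_eq[of y x] by (simp add: inner_commute mult.commute)
  then obtain \<sigma> where \<sigma>: "norm y *\<^sub>R x = \<sigma> *\<^sub>R y"
    by blast
  have "x = (1 / norm y) *\<^sub>R (norm y *\<^sub>R x)"
    using assms(1) by simp
  also have "\<dots> = (\<sigma> / norm y) *\<^sub>R y"
    using \<sigma> by simp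
  finally show ?thesis
    using that by blast
qed

(* The crossing property behind conv_c_merge_pair, normalised to p = 0: ya and yb are the inverses
   of a and b, u lies on the chord between them and m in the ball of radius 1/2. The claim is that
   the inverse of some point of conv_c {a, b} lies on the ray from m through u, at or beyond u. *)
locale chord_ray =
  fixes a b m :: "'a::euclidean_space" and \<theta> :: real
  assumes dist_ab: "dist a b < 2"
    and zero_notin: "0 \<notin> conv_c {a, b}"
    and \<theta>_bounds: "0 \<le> \<theta>" "\<theta> \<le> 1"
    and norm_m: "norm m \<le> 1/2"
begin

definition ya :: 'a where "ya = inversion 0 a"

definition yb :: 'a where "yb = inversion 0 b"

definition u :: 'a where "u = (1 - \<theta>) *\<^sub>R ya + \<theta> *\<^sub>R yb"

definition ray_reached :: bool where
  "ray_reached \<longleftrightarrow> (\<exists>x\<in>conv_c {a, b}. \<exists>t\<ge>0. inversion 0 x = u + t *\<^sub>R (u - m))"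

lemma a_nz: "a \<noteq> 0" and b_nz: "b \<noteq> 0"
  using zero_notin subset_conv_c by blast+

lemma a_eq: "a = (1 / norm ya ^ 2) *\<^sub>R ya"
proof -
  have "a = inversion 0 ya"
    by (simp add: ya_def)
  then show ?thesis
    by (simp only: inversion_def diff_zero)
qed

lemma b_eq: "b = (1 / norm yb ^ 2) *\<^sub>R yb"
proof -
  have "b = inversion 0 yb"
    by (simp add: yb_def)
  then show ?thesis
    by (simp only: inversion_def diff_zero)
qed

lemma scaleR_a: "c *\<^sub>R a = (c / norm ya ^ 2) *\<^sub>R ya"
proof -
  have "c *\<^sub>R a = c *\<^sub>R ((1 / norm ya ^ 2) *\<^sub>R ya)"
    using a_eq by (rule arg_cong)
  then show ?thesis
    by simp
qed

lemma scaleR_b: "c *\<^sub>R b = (c / norm yb ^ 2) *\<^sub>R yb"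
proof -
  have "c *\<^sub>R b = c *\<^sub>R ((1 / norm yb ^ 2) *\<^sub>R yb)"
    using b_eq by (rule arg_cong)
  then show ?thesis
    by simp
qed

lemma ya_nz: "ya \<noteq> 0" and yb_nz: "yb \<noteq> 0"
  using a_nz b_nz by (simp_all add: ya_def yb_def)

(* The inverted curve x s / |x s|^2 lies in the plane through ya, yb and m, and kc \<le> 0 keeps it on
   the side of the line through ya and yb away from m, where the ray continues beyond u. *)
lemma ray_reached_if_curve:
  fixes x :: "real \<Rightarrow> 'a" and ka kb kc :: "real \<Rightarrow> real"
  assumes m: "m = am *\<^sub>R ya + bm *\<^sub>R yb + \<eta>"
    and x: "\<And>s. x s = ka s *\<^sub>R ya + kb s *\<^sub>R yb + kc s *\<^sub>R \<eta>"
    and norm_x: "\<And>s. s \<in> {0..1} \<Longrightarrow> norm (x s)^2 = ka s + kb s + kc s * (1 - am - bm)"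
    and x_mem: "\<And>s. s \<in> {0..1} \<Longrightarrow> x s \<in> conv_c {a, b}"
    and kc_le: "\<And>s. s \<in> {0..1} \<Longrightarrow> kc s \<le> 0"
    and cont: "continuous_on {0..1} ka" "continuous_on {0..1} kb" "continuous_on {0..1} kc"
    and ends: "kb 0 = 0" "kc 0 = 0" "ka 1 = 0" "kc 1 = 0"
  shows ray_reached
proof -
  define L where "L s = ka s + kb s + kc s * (1 - am - bm)" for s
  have L_pos: "L s > 0" if "s \<in> {0..1}" for s
  proof -
    have "x s \<noteq> 0"
      using x_mem[OF that] zero_notin by auto
    then have "norm (x s)^2 > 0"
      by simp
    then show ?thesis
      using norm_x[OF that] by (simp add: L_def)
  qed
  define h where "h s = kb s / L s - \<theta> + kc s / L s * (\<theta> - bm)" for s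
  have "\<forall>s\<in>{0..1}. L s \<noteq> 0"
    using L_pos by force
  then have "continuous_on {0..1} h"
    unfolding h_def L_def by (intro continuous_intros cont) auto
  moreover have "h 0 = - \<theta>" "h 1 = 1 - \<theta>"
    using L_pos[of 1] by (simp_all add: h_def L_def ends)
  ultimately obtain s where s: "s \<in> {0..1}" "h s = 0"
    using IVT'[of h 0 0 1] \<theta>_bounds by auto
  define t where "t = - kc s / L s"
  have "t \<ge> 0"
    using kc_le[OF s(1)] L_pos[OF s(1)] by (simp add: t_def divide_nonpos_pos)
  have c3: "kc s / L s = - t"
    by (simp add: t_def)
  have c2: "kb s / L s = \<theta> + t * (\<theta> - bm)"
    using s(2) by (simp add: h_def t_def algebra_simps)
  have "ka s / L s + kb s / L s + kc s / L s * (1 - am - bm) = 1"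
    using L_pos[OF s(1)] by (simp add: L_def add_divide_distrib[symmetric])
  then have c1: "ka s / L s = 1 - \<theta> + t * (1 - \<theta> - am)"
    using c2 c3 by (simp add: algebra_simps)
  have "inversion 0 (x s) = (ka s / L s) *\<^sub>R ya + (kb s / L s) *\<^sub>R yb + (kc s / L s) *\<^sub>R \<eta>"
    using norm_x[OF s(1)] by (simp add: inversion_def x L_def scaleR_add_right)
  also have "\<dots> = u + t *\<^sub>R (u - m)"
    unfolding c1 c2 c3 u_def m by (simp add: algebra_simps)
  finally show ?thesis
    unfolding ray_reached_def using x_mem[OF s(1)] \<open>t \<ge> 0\<close> by blast
qed

lemma scale_factor_pos_if_collinear:
  assumes b: "b = c *\<^sub>R a"
  shows "c > 0"
proof (rule ccontr)
  assume "\<not> c > 0"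
  moreover have "c \<noteq> 0"
    using b b_nz by auto
  ultimately have "c < 0"
    by simp
  define \<mu> where "\<mu> = 1 / (1 - c)"
  have "(1 - \<mu>) *\<^sub>R a + \<mu> *\<^sub>R b = ((1 - \<mu>) + \<mu> * c) *\<^sub>R a"
    by (simp add: b scaleR_add_left)
  also have "(1 - \<mu>) + \<mu> * c = 0"
    using \<open>c < 0\<close> by (simp add: \<mu>_def field_simps)
  finally have "0 \<in> closed_segment a b"
    using \<open>c < 0\<close> by (auto simp: in_segment \<mu>_def intro!: exI[of _ \<mu>])
  then show False
    using closed_segment_subset_conv_c zero_notin by blast
qed

lemma ray_reached_if_collinear:
  assumes b: "b = c *\<^sub>R a"
  shows ray_reached
proof -
  have "c > 0"
    using scale_factor_pos_if_collinear[OF b] .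
  define D where "D = (1 - \<theta>) * c + \<theta>"
  define \<mu> where "\<mu> = \<theta> / D"
  define x where "x = (1 - \<mu>) *\<^sub>R a + \<mu> *\<^sub>R b"
  have den: "D > 0"
    using \<open>c > 0\<close> \<theta>_bounds by (cases "\<theta> = 0") (auto simp: D_def intro: add_nonneg_pos add_nonneg_nonneg)
  have "0 \<le> \<mu>" "\<mu> \<le> 1"
    using den \<theta>_bounds \<open>c > 0\<close> by (auto simp: \<mu>_def D_def field_simps)
  then have "x \<in> conv_c {a, b}"
    using closed_segment_subset_conv_c by (force simp: x_def in_segment)
  moreover have "inversion 0 x = u"
  proof -
    have "x = ((1 - \<mu>) + \<mu> * c) *\<^sub>R a"
      by (simp add: x_def b scaleR_add_left)
    moreover have "(1 - \<mu>) + \<mu> * c = (D + \<theta> * (c - 1)) / D"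
      using den by (simp add: \<mu>_def field_simps)
    moreover have "D + \<theta> * (c - 1) = c"
      by (simp add: D_def algebra_simps)
    ultimately have "inversion 0 x = (D / c) *\<^sub>R ya"
      by (simp add: inversion_0_scaleR ya_def)
    also have "\<dots> = u"
    proof -
      have "yb = (1 / c) *\<^sub>R ya"
        unfolding yb_def ya_def unfolding b by (simp add: inversion_0_scaleR)
      then show ?thesis
        using \<open>c > 0\<close> by (simp add: u_def D_def scaleR_add_left add_divide_distrib)
    qed
    finally show ?thesis .
  qed
  ultimately show ?thesis
    unfolding ray_reached_def by (metis add.right_neutral order_refl scaleR_zero_left)
qed

(* ya \<bullet> z = 1/2 says that a lies on the sphere about z through 0, so a short arc of this sphere
   joins a and b inside conv_c {a, b}. When g \<noteq> 0, the condition m \<bullet> z = 1/2 puts m on the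
   image of this sphere under inversion. *)
lemma ray_reached_if_arc:
  assumes z: "z = \<alpha> *\<^sub>R ya + \<beta> *\<^sub>R yb + g *\<^sub>R \<eta>" and m: "m = am *\<^sub>R ya + bm *\<^sub>R yb + \<eta>"
    and on_sphere: "ya \<bullet> z = 1/2" "yb \<bullet> z = 1/2" and "1 \<le> norm z"
    and "0 \<le> g" and g: "g = 0 \<or> m \<bullet> z = 1/2"
  shows ray_reached
proof -
  have "norm (a - z) = norm z" "norm (b - z) = norm z"
    using norm_inversion_minus_eq_iff[OF ya_nz, of z] norm_inversion_minus_eq_iff[OF yb_nz, of z] on_sphere
    by (simp_all add: ya_def yb_def)
  then obtain K where K: "continuous_on {0..1} K" "K 0 = 1" "K 1 = 1"
    and K_ge: "\<And>s. s \<in> {0..1} \<Longrightarrow> 1 \<le> K s"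
    and mem: "\<And>s. s \<in> {0..1} \<Longrightarrow> (1 - K s) *\<^sub>R z + (K s * (1 - s)) *\<^sub>R a + (K s * s) *\<^sub>R b \<in> conv_c {a, b}"
    and dist: "\<And>s. s \<in> {0..1} \<Longrightarrow> norm ((1 - K s) *\<^sub>R z + (K s * (1 - s)) *\<^sub>R a + (K s * s) *\<^sub>R b - z) = norm z"
    using obtain_sphere_arc[OF \<open>1 \<le> norm z\<close> _ _ dist_ab] by metis
  define x where "x s = (1 - K s) *\<^sub>R z + (K s * (1 - s)) *\<^sub>R a + (K s * s) *\<^sub>R b" for s
  define ka where "ka s = (1 - K s) * \<alpha> + K s * (1 - s) / norm ya ^ 2" for s
  define kb where "kb s = (1 - K s) * \<beta> + K s * s / norm yb ^ 2" for s
  define kc where "kc s = (1 - K s) * g" for s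
  have x: "x s = ka s *\<^sub>R ya + kb s *\<^sub>R yb + kc s *\<^sub>R \<eta>" for s
    unfolding x_def ka_def kb_def kc_def z scaleR_a scaleR_b by (simp add: algebra_simps)
  have "g = 0 \<or> 2 * (\<eta> \<bullet> z) = 1 - am - bm"
    using g on_sphere by (auto simp: m inner_add_left)
  then have eta_z: "kc s * (2 * (\<eta> \<bullet> z)) = kc s * (1 - am - bm)" for s
    by (auto simp: kc_def)
  show ?thesis
  proof (rule ray_reached_if_curve[OF m x])
    show "norm (x s)^2 = ka s + kb s + kc s * (1 - am - bm)" if "s \<in> {0..1}" for s
    proof -
      have "norm (x s)^2 = 2 * (x s \<bullet> z)"
        using dist[OF that] power2_norm_diff[of "x s" z] by (simp add: x_def)
      also have "\<dots> = ka s + kb s + kc s * (2 * (\<eta> \<bullet> z))"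
        using on_sphere by (simp add: x inner_add_left inner_commute algebra_simps)
      finally show ?thesis
        using eta_z by simp
    qed
    show "x s \<in> conv_c {a, b}" if "s \<in> {0..1}" for s
      using mem[OF that] by (simp add: x_def)
    show "kc s \<le> 0" if "s \<in> {0..1}" for s
      using K_ge[OF that] \<open>0 \<le> g\<close> by (simp add: kc_def mult_nonpos_nonneg)
    show "continuous_on {0..1} ka" "continuous_on {0..1} kb" "continuous_on {0..1} kc"
      using ya_nz yb_nz unfolding ka_def kb_def kc_def by (auto intro!: continuous_intros K(1))
    show "kb 0 = 0" "kc 0 = 0" "ka 1 = 0" "kc 1 = 0"
      by (simp_all add: ka_def kb_def kc_def K(2,3))
  qed
qed

lemma ray_reached_if_segment:
  assumes m: "m = am *\<^sub>R ya + bm *\<^sub>R yb" and "am + bm < 1"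
  shows ray_reached
proof -
  define e where "e = 1 - am - bm"
  have "e > 0"
    using \<open>am + bm < 1\<close> by (simp add: e_def)
  define x where "x s = (1 - s) *\<^sub>R a + s *\<^sub>R b" for s
  define ka where "ka s = (1 - s) / norm ya ^ 2" for s
  define kb where "kb s = s / norm yb ^ 2" for s
  define kc where "kc s = (norm (x s)^2 - ka s - kb s) / e" for s
  have norm_a: "norm a ^ 2 = 1 / norm ya ^ 2" and norm_b: "norm b ^ 2 = 1 / norm yb ^ 2"
    by (simp_all add: ya_def yb_def norm_inversion power_one_over)
  show ?thesis
  proof (rule ray_reached_if_curve[of am bm 0 x ka kb kc])
    show "m = am *\<^sub>R ya + bm *\<^sub>R yb + 0"
      by (simp add: m)
    show "x s = ka s *\<^sub>R ya + kb s *\<^sub>R yb + kc s *\<^sub>R 0" for s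
      unfolding x_def ka_def kb_def scaleR_a scaleR_b by simp
    show "norm (x s)^2 = ka s + kb s + kc s * (1 - am - bm)" for s
      using \<open>e > 0\<close> by (simp add: kc_def e_def)
    show "x s \<in> conv_c {a, b}" if "s \<in> {0..1}" for s
      using that closed_segment_subset_conv_c by (force simp: x_def in_segment)
    show "kc s \<le> 0" if "s \<in> {0..1}" for s
      using norm_convex_comb_power2_le[of s a b] that \<open>e > 0\<close>
      by (simp add: kc_def x_def ka_def kb_def norm_a norm_b divide_nonpos_pos)
    show "continuous_on {0..1} ka" "continuous_on {0..1} kb" "continuous_on {0..1} kc"
      using ya_nz yb_nz \<open>e > 0\<close> unfolding ka_def kb_def kc_def x_def
      by (auto intro!: continuous_intros)
    show "kb 0 = 0" "kc 0 = 0" "ka 1 = 0" "kc 1 = 0"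
      by (simp_all add: ka_def kb_def kc_def x_def norm_a norm_b)
  qed
qed

(* The centre z of the sphere through 0, a and b is moved along the part \<eta> of m orthogonal to the
   plane of ya and yb until the image hyperplane {y. y \<bullet> z' = 1/2} contains m as well; then
   Cauchy-Schwarz and |m| \<le> 1/2 make the radius at least 1. *)
lemma ray_reached_if_lifted_center:
  assumes z: "z = \<alpha> *\<^sub>R ya + \<beta> *\<^sub>R yb" and on_sphere: "ya \<bullet> z = 1/2" "yb \<bullet> z = 1/2"
    and m: "m = am *\<^sub>R ya + bm *\<^sub>R yb + \<eta>" and orth: "ya \<bullet> \<eta> = 0" "yb \<bullet> \<eta> = 0"
    and "\<eta> \<noteq> 0" and "am + bm < 1" and m_z: "m \<bullet> z = (am + bm) / 2"
  shows ray_reached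
proof -
  define g where "g = (1 - am - bm) / (2 * norm \<eta> ^ 2)"
  define z' where "z' = z + g *\<^sub>R \<eta>"
  have "0 \<le> g"
    using \<open>am + bm < 1\<close> by (simp add: g_def)
  have on_sphere': "ya \<bullet> z' = 1/2" "yb \<bullet> z' = 1/2"
    using on_sphere orth by (simp_all add: z'_def inner_add_right)
  have "m \<bullet> \<eta> = norm \<eta> ^ 2"
    unfolding m inner_add_left inner_scaleR_left orth power2_norm_eq_inner by simp
  then have "m \<bullet> z' = (am + bm) / 2 + g * norm \<eta> ^ 2"
    unfolding z'_def inner_add_right inner_scaleR_right m_z by simp
  also have "g * norm \<eta> ^ 2 = (1 - am - bm) / 2"
    using \<open>\<eta> \<noteq> 0\<close> by (simp add: g_def)
  finally have "m \<bullet> z' = 1/2"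
    by (simp add: field_simps)
  have "1/2 \<le> norm m * norm z'"
    using \<open>m \<bullet> z' = 1/2\<close> norm_cauchy_schwarz[of m z'] by simp
  also have "\<dots> \<le> 1/2 * norm z'"
    by (rule mult_right_mono[OF norm_m norm_ge_zero])
  finally have "1 \<le> norm z'"
    by simp
  show ?thesis
    by (rule ray_reached_if_arc[of z' \<alpha> \<beta> g \<eta> am bm])
      (use z m on_sphere' \<open>1 \<le> norm z'\<close> \<open>0 \<le> g\<close> \<open>m \<bullet> z' = 1/2\<close> in \<open>simp_all add: z'_def\<close>)
qed

lemma ray_reached_if_small_center:
  assumes z: "z = \<alpha> *\<^sub>R ya + \<beta> *\<^sub>R yb" and on_sphere: "ya \<bullet> z = 1/2" "yb \<bullet> z = 1/2"
    and "norm z < 1" and gram: "(ya \<bullet> yb)^2 \<noteq> (ya \<bullet> ya) * (yb \<bullet> yb)"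
  shows ray_reached
proof -
  obtain am bm \<eta> where m: "m = am *\<^sub>R ya + bm *\<^sub>R yb + \<eta>" and orth: "ya \<bullet> \<eta> = 0" "yb \<bullet> \<eta> = 0"
    using obtain_orthogonal_decomposition2[OF gram] by blast
  then have "\<eta> \<bullet> z = 0"
    by (simp add: z inner_add_right inner_commute)
  then have m_z: "m \<bullet> z = (am + bm) / 2"
    unfolding m inner_add_left inner_scaleR_left on_sphere by simp
  have "m \<bullet> z \<le> norm m * norm z"
    by (rule norm_cauchy_schwarz)
  also have "\<dots> \<le> 1/2 * norm z"
    by (rule mult_right_mono[OF norm_m norm_ge_zero])
  also have "\<dots> < 1/2"
    using \<open>norm z < 1\<close> by simp
  finally have "am + bm < 1"
    using m_z by simp
  show ?thesis
  proof (cases "\<eta> = 0")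
    case True
    then show ?thesis
      using ray_reached_if_segment[of am bm] m \<open>am + bm < 1\<close> by simp
  next
    case False
    then show ?thesis
      using ray_reached_if_lifted_center[OF z on_sphere m orth _ \<open>am + bm < 1\<close> m_z] by blast
  qed
qed

lemma ray_is_reached: ray_reached
proof (cases "\<exists>c. b = c *\<^sub>R a")
  case True
  then show ?thesis
    using ray_reached_if_collinear by blast
next
  case False
  have gram: "(ya \<bullet> yb)^2 \<noteq> (ya \<bullet> ya) * (yb \<bullet> yb)"
  proof
    assume "(ya \<bullet> yb)^2 = (ya \<bullet> ya) * (yb \<bullet> yb)"
    then have "(yb \<bullet> ya)^2 = (yb \<bullet> yb) * (ya \<bullet> ya)"
      by (simp add: inner_commute mult.commute)
    then obtain k where k: "yb = k *\<^sub>R ya"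
      using obtain_collinear_if_inner_power2_eq[OF ya_nz] by blast
    have "b = inversion 0 yb"
      by (simp add: yb_def)
    also have "\<dots> = (1 / k) *\<^sub>R inversion 0 ya"
      by (simp add: k inversion_0_scaleR)
    also have "inversion 0 ya = a"
      by (simp add: ya_def)
    finally show False
      using False by blast
  qed
  obtain \<alpha> \<beta> where on_sphere:
      "ya \<bullet> (\<alpha> *\<^sub>R ya + \<beta> *\<^sub>R yb) = 1/2" "yb \<bullet> (\<alpha> *\<^sub>R ya + \<beta> *\<^sub>R yb) = 1/2"
    using obtain_span2_inner[OF gram, of "1/2" "1/2"] by blast
  show ?thesis
  proof (cases "1 \<le> norm (\<alpha> *\<^sub>R ya + \<beta> *\<^sub>R yb)")
    case True
    show ?thesis
      by (rule ray_reached_if_arc[of _ \<alpha> \<beta> 0 m 0 0]) (use True on_sphere in simp_all)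
  next
    case False
    then show ?thesis
      using ray_reached_if_small_center[OF refl on_sphere _ gram] by simp
  qed
qed

end

lemma inversion_ray_reached:
  fixes a b p m :: "'a::euclidean_space"
  assumes "dist a b < 2" "p \<notin> conv_c {a, b}" "0 \<le> \<theta>" "\<theta> \<le> 1" "norm m \<le> 1/2"
  defines "u \<equiv> (1 - \<theta>) *\<^sub>R inversion p a + \<theta> *\<^sub>R inversion p b"
  shows "\<exists>x\<in>conv_c {a, b}. \<exists>t\<ge>0. inversion p x = u + t *\<^sub>R (u - m)"
proof -
  have shift: "conv_c {a - p, b - p} = (\<lambda>x. x - p) ` conv_c {a, b}"
    using conv_c_translation[of p "{a, b}"] by simp
  interpret pq: chord_ray "a - p" "b - p" m \<theta>
  proof
    show "dist (a - p) (b - p) < 2"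
      using assms(1) by (simp add: dist_norm)
    show "0 \<notin> conv_c {a - p, b - p}"
      using assms(2) by (auto simp: shift)
  qed (use assms(3-5) in auto)
  obtain x t where "x \<in> conv_c {a - p, b - p}" "t \<ge> 0" and x: "inversion 0 x = pq.u + t *\<^sub>R (pq.u - m)"
    using pq.ray_is_reached unfolding pq.ray_reached_def by blast
  then obtain x' where "x' \<in> conv_c {a, b}" "x = x' - p"
    by (auto simp: shift)
  moreover have "pq.u = u"
    by (simp add: u_def pq.u_def pq.ya_def pq.yb_def inversion_shift[of p])
  ultimately show ?thesis
    using x \<open>t \<ge> 0\<close> by (metis inversion_shift)
qed

lemma mem_closed_segment_if_ray:
  fixes u k y :: "'a::real_vector"
  assumes "0 \<le> \<gamma>" "\<gamma> \<le> 1" "0 \<le> t"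
    and y: "y = (1 - \<gamma>) *\<^sub>R u + \<gamma> *\<^sub>R k"
  shows "y \<in> closed_segment (u + t *\<^sub>R (u - y)) k"
proof -
  define c where "c = u + t *\<^sub>R (u - y)"
  define \<sigma> where "\<sigma> = \<gamma> * (1 + t) / (1 + t * \<gamma>)"
  have den: "1 + t * \<gamma> > 0"
    using assms(1,3) by (simp add: add_pos_nonneg)
  have "(1 + t * \<gamma>) *\<^sub>R ((1 - \<sigma>) *\<^sub>R c + \<sigma> *\<^sub>R k)
      = ((1 + t * \<gamma>) * (1 - \<sigma>)) *\<^sub>R c + ((1 + t * \<gamma>) * \<sigma>) *\<^sub>R k"
    by (simp add: scaleR_add_right)
  also have "\<dots> = (1 - \<gamma>) *\<^sub>R c + (\<gamma> * (1 + t)) *\<^sub>R k"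
  proof -
    have "(1 + t * \<gamma>) * (1 - \<sigma>) = 1 - \<gamma>" "(1 + t * \<gamma>) * \<sigma> = \<gamma> * (1 + t)"
      using den by (simp_all add: \<sigma>_def field_simps)
    then show ?thesis
      by (simp only:)
  qed
  also have "\<dots> = (1 + t * \<gamma>) *\<^sub>R y"
    by (simp add: c_def y algebra_simps)
  finally have "(1 - \<sigma>) *\<^sub>R c + \<sigma> *\<^sub>R k = y"
    using den by simp
  moreover have "0 \<le> \<sigma>" "\<sigma> \<le> 1"
    using assms(1-3) den by (simp_all add: \<sigma>_def field_simps)
  ultimately show ?thesis
    unfolding c_def[symmetric] in_segment by blast
qed

lemma obtain_convex_hull_insert2:
  fixes a b :: "'a::euclidean_space"
  assumes "y \<in> convex hull (insert a (insert b T))" "T \<noteq> {}"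
  obtains \<gamma> \<theta> k where "0 \<le> \<gamma>" "\<gamma> \<le> 1" "0 \<le> \<theta>" "\<theta> \<le> 1" "k \<in> convex hull T"
    "y = (1 - \<gamma>) *\<^sub>R ((1 - \<theta>) *\<^sub>R a + \<theta> *\<^sub>R b) + \<gamma> *\<^sub>R k"
proof -
  have "convex hull (insert a (insert b T)) \<subseteq> convex hull (convex hull {a, b} \<union> convex hull T)"
    by (intro hull_mono) (auto intro: hull_inc)
  also have "\<dots> = {v *\<^sub>R s + w *\<^sub>R t |v w s t. 0 \<le> v \<and> 0 \<le> w \<and> v + w = 1 \<and>
      s \<in> convex hull {a, b} \<and> t \<in> convex hull T}"
    using assms(2) by (intro convex_hull_union_two) auto
  finally obtain \<gamma> s k where "0 \<le> \<gamma>" "\<gamma> \<le> 1" "s \<in> closed_segment a b" "k \<in> convex hull T"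
      "y = (1 - \<gamma>) *\<^sub>R s + \<gamma> *\<^sub>R k"
    using assms(1) by (auto simp: segment_convex_hull)
  then show ?thesis
    using that by (auto simp: in_segment)
qed

lemma obtain_inversion_hull_replacing_pair:
  assumes "dist a b < 2" "p \<notin> conv_c {a, b}" "T \<noteq> {}"
    and y: "y \<in> convex hull (inversion p ` insert a (insert b T))" "norm y \<le> 1/2"
  obtains x where "x \<in> conv_c {a, b}" "y \<in> convex hull (inversion p ` insert x T)"
proof -
  have T_image: "inversion p ` T \<noteq> {}"
    using \<open>T \<noteq> {}\<close> by simp
  obtain \<gamma> \<theta> k where decomp: "0 \<le> \<gamma>" "\<gamma> \<le> 1" "0 \<le> \<theta>" "\<theta> \<le> 1"
      "k \<in> convex hull (inversion p ` T)"
      "y = (1 - \<gamma>) *\<^sub>R ((1 - \<theta>) *\<^sub>R inversion p a + \<theta> *\<^sub>R inversion p b) + \<gamma> *\<^sub>R k"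
    by (rule obtain_convex_hull_insert2[OF y(1)[unfolded image_insert] T_image])
  obtain x t where x: "x \<in> conv_c {a, b}" "0 \<le> t"
      "inversion p x = ((1 - \<theta>) *\<^sub>R inversion p a + \<theta> *\<^sub>R inversion p b)
        + t *\<^sub>R (((1 - \<theta>) *\<^sub>R inversion p a + \<theta> *\<^sub>R inversion p b) - y)"
    using inversion_ray_reached[OF assms(1,2) decomp(3,4) y(2)] by blast
  have "y \<in> closed_segment (inversion p x) k"
    unfolding x(3) by (rule mem_closed_segment_if_ray[OF decomp(1,2) x(2) decomp(6)])
  moreover have "inversion p x \<in> convex hull (inversion p ` insert x T)"
    by (simp add: hull_inc)
  moreover have "k \<in> convex hull (inversion p ` insert x T)"
    using decomp(5) by (meson hull_mono image_mono subset_insertI subsetD)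
  ultimately have "y \<in> convex hull (inversion p ` insert x T)"
    using closed_segment_subset[OF _ _ convex_convex_hull] by blast
  with x(1) show ?thesis
    by (rule that)
qed

lemma conv_c_merge_pair:
  assumes "r < 1" "a \<in> cball z r" "b \<in> cball z r" "T \<subseteq> cball z r" "finite T"
    and p: "p \<in> conv_c (insert a (insert b T))"
  shows "\<exists>x\<in>conv_c {a, b}. p \<in> conv_c (insert x T)"
proof (cases "p \<in> conv_c {a, b} \<or> p \<in> T")
  case True
  then show ?thesis
    using subset_conv_c by blast
next
  case False
  let ?S = "insert a (insert b T)"
  have "a \<in> conv_c {a, b}" "b \<in> conv_c {a, b}"
    using subset_conv_c by blast+
  then have "T \<noteq> {}" "p \<notin> ?S"
    using False p by auto
  have S: "?S \<subseteq> cball z r"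
    using assms(2-4) by auto
  have "dist z p \<le> r"
    using conv_c_subset_cball[OF assms(1) S] p by auto
  then have "dist p z < 1"
    using assms(1) by (simp add: dist_commute)
  have "compact ?S"
    using assms(5) by (simp add: finite_imp_compact)
  then obtain y where y: "y \<in> convex hull (inversion p ` ?S)" "norm y \<le> 1/2"
    using inversion_hull_meets_cball_half[OF _ \<open>p \<notin> ?S\<close> p] by blast
  have "dist z a \<le> r" "dist z b \<le> r"
    using assms(2,3) by simp_all
  then have "dist a b < 2"
    using dist_triangle3[of a b z] assms(1) by linarith
  moreover have "p \<notin> conv_c {a, b}"
    using False by blast
  ultimately obtain x where x: "x \<in> conv_c {a, b}" "y \<in> convex hull (inversion p ` insert x T)"
    using obtain_inversion_hull_replacing_pair[OF _ _ \<open>T \<noteq> {}\<close> y] by blast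
  have "insert x T \<subseteq> cball z r"
    using x(1) conv_c_subset_cball[OF assms(1), of "{a, b}" z] assms(2-4) by blast
  moreover have "p \<notin> insert x T"
    using False x(1) by auto
  ultimately have "p \<in> conv_c (insert x T)"
    using mem_conv_c_if_inversion_hull[OF assms(1) _ \<open>dist p z < 1\<close> _ x(2) y(2)] by blast
  then show ?thesis
    using x(1) by blast
qed

section \<open>c-hulls of unions\<close>

lemma conv_c_merge_set:
  assumes "r < 1" and "finite S" "S \<noteq> {}" "S \<subseteq> cball z r"
  shows "finite T \<Longrightarrow> T \<subseteq> cball z r \<Longrightarrow> p \<in> conv_c (S \<union> T) \<Longrightarrow>
    \<exists>x\<in>conv_c S. p \<in> conv_c (insert x T)"
  using assms(2-4)
proof (induction S arbitrary: T rule: finite_ne_induct)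
  case (singleton s)
  then show ?case
    using subset_conv_c by auto
next
  case (insert s S)
  have "s \<in> cball z r" "S \<subseteq> cball z r"
    using insert.prems(4) by auto
  moreover have "p \<in> conv_c (S \<union> insert s T)"
    using insert.prems(3) by simp
  ultimately obtain x0 where x0: "x0 \<in> conv_c S" "p \<in> conv_c (insert x0 (insert s T))"
    using insert.IH[of "insert s T"] insert.prems(1,2) by auto
  have "x0 \<in> cball z r"
    using x0(1) conv_c_subset_cball[OF assms(1) \<open>S \<subseteq> cball z r\<close>] by blast
  then obtain x where x: "x \<in> conv_c {x0, s}" "p \<in> conv_c (insert x T)"
    using conv_c_merge_pair[OF assms(1) _ \<open>s \<in> cball z r\<close> insert.prems(2,1) x0(2)] by blast
  have "{x0, s} \<subseteq> conv_c (insert s S)"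
    using x0(1) conv_c_mono[of S "insert s S"] subset_conv_c[of "insert s S"] by auto
  then have "x \<in> conv_c (insert s S)"
    using x(1) conv_c_subset by blast
  then show ?case
    using x(2) by blast
qed

lemma mem_conv_c_Un_imp_pair:
  assumes "r < 1" "finite S" "S \<noteq> {}" "S \<subseteq> cball z r" "finite T" "T \<noteq> {}" "T \<subseteq> cball z r"
    and "p \<in> conv_c (S \<union> T)"
  shows "\<exists>x\<in>conv_c S. \<exists>y\<in>conv_c T. p \<in> conv_c {x, y}"
proof -
  obtain x where x: "x \<in> conv_c S" "p \<in> conv_c (insert x T)"
    using conv_c_merge_set[OF assms(1-4,5,7,8)] by blast
  have "x \<in> cball z r"
    using x(1) conv_c_subset_cball[OF assms(1,4)] by blast
  then have "p \<in> conv_c (T \<union> {x})"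
    using x(2) by simp
  then obtain y where y: "y \<in> conv_c T" "p \<in> conv_c (insert y {x})"
    using conv_c_merge_set[OF assms(1,5,6,7)] \<open>x \<in> cball z r\<close> by blast
  have "p \<in> conv_c {x, y}"
    using y(2) by (simp add: insert_commute)
  then show ?thesis
    using x(1) y(1) by blast
qed

lemma obtain_card_halves:
  assumes "finite F" "n < card F" "card F \<le> 2 * n"
  obtains S T where "F = S \<union> T" "finite S" "finite T" "S \<noteq> {}" "T \<noteq> {}" "card S \<le> n" "card T \<le> n"
proof -
  obtain S where S: "S \<subseteq> F" "card S = n" "finite S"
    using obtain_subset_with_card_n[of n F] assms(2) by auto
  have "card (F - S) = card F - n"
    using S assms(1) by (simp add: card_Diff_subset)
  then have "card (F - S) > 0" "card (F - S) \<le> n"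
    using assms(2,3) by simp_all
  then have "F - S \<noteq> {}" "card (F - S) \<le> n"
    using card_gt_0_iff by blast+
  moreover have "S \<noteq> {}"
    using S(2) assms(2,3) by auto
  moreover have "F = S \<union> (F - S)"
    using S(1) by auto
  ultimately show ?thesis
    using that[of S "F - S"] S(2,3) assms(1) by auto
qed

lemma conv_c_subset_cseq:
  assumes "r < 1" "A \<subseteq> cball z r"
  shows "finite F \<Longrightarrow> F \<noteq> {} \<Longrightarrow> F \<subseteq> A \<Longrightarrow> card F \<le> 2 ^ j \<Longrightarrow> conv_c F \<subseteq> cseq A j"
proof (induction j arbitrary: F)
  case 0
  then have "card F = 1"
    using card_gt_0_iff[of F] by simp
  then obtain a where "F = {a}"
    by (rule card_1_singletonE)
  then show ?case
    using 0 by (simp add: conv_c_singleton)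
next
  case (Suc j)
  show ?case
  proof (cases "card F \<le> 2 ^ j")
    case True
    then show ?thesis
      using Suc.IH[OF Suc.prems(1-3)] cseq_subset_Suc by blast
  next
    case False
    then obtain S T where F: "F = S \<union> T" and ST: "finite S" "finite T" "S \<noteq> {}" "T \<noteq> {}"
      and card: "card S \<le> 2 ^ j" "card T \<le> 2 ^ j"
      using obtain_card_halves[OF Suc.prems(1), of "2 ^ j"] Suc.prems(4) by auto
    have "S \<subseteq> A" "T \<subseteq> A"
      using F Suc.prems(3) by auto
    then have IH: "conv_c S \<subseteq> cseq A j" "conv_c T \<subseteq> cseq A j"
      using Suc.IH ST card by auto
    have "S \<subseteq> cball z r" "T \<subseteq> cball z r"
      using \<open>S \<subseteq> A\<close> \<open>T \<subseteq> A\<close> assms(2) by auto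
    show ?thesis
    proof
      fix p assume "p \<in> conv_c F"
      then obtain x y where "x \<in> conv_c S" "y \<in> conv_c T" "p \<in> conv_c {x, y}"
        using mem_conv_c_Un_imp_pair[OF assms(1) ST(1,3) \<open>S \<subseteq> cball z r\<close> ST(2,4) \<open>T \<subseteq> cball z r\<close>]
          F by blast
      then show "p \<in> cseq A (Suc j)"
        using IH by (simp only: cseq.simps) blast
    qed
  qed
qed

lemma obtain_small_subset_conv_c:
  fixes A :: "'a::euclidean_space set"
  assumes "compact A" "r < 1" "A \<subseteq> cball z r" "p \<in> conv_c A"
  obtains F where "finite F" "F \<noteq> {}" "F \<subseteq> A" "card F \<le> DIM('a) + 1" "p \<in> conv_c F"
proof (cases "p \<in> A")
  case True
  then show ?thesis
    using that[of "{p}"] subset_conv_c[of "{p}"] by auto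
next
  case False
  obtain y where y: "y \<in> convex hull (inversion p ` A)" "norm y \<le> 1/2"
    using inversion_hull_meets_cball_half[OF assms(1) False assms(4)] by blast
  then have "y \<in> {x. \<exists>Y. finite Y \<and> Y \<subseteq> inversion p ` A \<and> card Y \<le> DIM('a) + 1 \<and> x \<in> convex hull Y}"
    by (simp only: caratheodory[of "inversion p ` A"])
  then obtain Y where Y: "finite Y" "Y \<subseteq> inversion p ` A" "card Y \<le> DIM('a) + 1" "y \<in> convex hull Y"
    by blast
  obtain F where F: "F \<subseteq> A" "finite F" "Y = inversion p ` F"
    using finite_subset_image[OF Y(1,2)] by blast
  have "card F = card Y"
    unfolding F(3) by (rule card_image[OF inj_on_subset[OF inj_inversion subset_UNIV], symmetric])
  have "F \<noteq> {}"
    using Y(4) F(3) by auto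
  have "dist z p \<le> r"
    using conv_c_subset_cball[OF assms(2,3)] assms(4) by auto
  then have "dist p z < 1"
    using assms(2) by (simp add: dist_commute)
  have "F \<subseteq> cball z r" "p \<notin> F"
    using F(1) assms(3) False by auto
  moreover have "y \<in> convex hull (inversion p ` F)"
    using Y(4) F(3) by simp
  ultimately have "p \<in> conv_c F"
    using mem_conv_c_if_inversion_hull[OF assms(2) _ \<open>dist p z < 1\<close> _ _ y(2)] by blast
  then show ?thesis
    using that[OF F(2) \<open>F \<noteq> {}\<close> F(1)] Y(3) \<open>card F = card Y\<close> by simp
qed

lemma obtain_cball_if_Outrad_lt_1:
  assumes "bounded A" "Outrad A < 1"
  obtains z r where "r < 1" "A \<subseteq> cball z r"
proof -
  have radii: "{R. \<exists>z. A \<subseteq> cball z R} \<noteq> {}"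
    using assms(1) by (auto simp: bounded_subset_cball)
  have "Inf {R. \<exists>z. A \<subseteq> cball z R} < 1"
    using assms(2) by (simp add: Outrad_def)
  then obtain r where "r \<in> {R. \<exists>z. A \<subseteq> cball z R}" "r < 1"
    using cInf_lessD[OF radii] by blast
  then show ?thesis
    using that by blast
qed

lemma cseq_eq_UNIV_if_unbounded:
  assumes "\<not> bounded A" "1 \<le> j"
  shows "cseq A j = UNIV"
proof -
  have "A \<noteq> {}"
    using assms(1) by auto
  then obtain a where "a \<in> A"
    by blast
  have "\<not> (\<forall>b\<in>A. dist a b \<le> 2)"
    using assms(1) unfolding bounded_def by blast
  then obtain b where "b \<in> A" "dist a b > 2"
    by (auto simp: not_le)
  then have "conv_c {a, b} \<subseteq> cseq A 1"
    using \<open>a \<in> A\<close> by auto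
  then have "cseq A 1 = UNIV"
    using conv_c_eq_UNIV_if_far[OF \<open>dist a b > 2\<close>] by auto
  then show ?thesis
    using cseq_mono[OF assms(2), of A] by auto
qed

lemma conv_c_subset_cseq_if_compact:
  fixes A :: "'a::euclidean_space set"
  assumes "compact A" "r < 1" "A \<subseteq> cball z r" "DIM('a) < 2 ^ j"
  shows "conv_c A \<subseteq> cseq A j"
proof
  fix p assume "p \<in> conv_c A"
  then obtain F where F: "finite F" "F \<noteq> {}" "F \<subseteq> A" "card F \<le> DIM('a) + 1" "p \<in> conv_c F"
    using obtain_small_subset_conv_c[OF assms(1-3)] by blast
  have "card F \<le> 2 ^ j"
    using F(4) assms(4) by linarith
  then have "conv_c F \<subseteq> cseq A j"
    by (rule conv_c_subset_cseq[OF assms(2,3) F(1-3)])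
  then show "p \<in> cseq A j"
    using F(5) by blast
qed

theorem theorem4p25:
  fixes A :: "'a::euclidean_space set"
  assumes "DIM('a) \<ge> 2"
    and "closed A"
    and "Outrad A < 1"
  shows "(\<forall>j. cseq A j \<subseteq> conv_c A) \<and>
         (\<forall>j. 2 ^ j > DIM('a) \<longrightarrow> cseq A j = conv_c A)"
proof (intro conjI allI impI)
  show "cseq A j \<subseteq> conv_c A" for j
    by (rule cseq_subset_conv_c)
  fix j :: nat
  assume j: "2 ^ j > DIM('a)"
  have "conv_c A \<subseteq> cseq A j"
  proof (cases "bounded A")
    case True
    then obtain z r where "r < 1" "A \<subseteq> cball z r"
      using obtain_cball_if_Outrad_lt_1 assms(3) by blast
    moreover have "compact A"
      using True assms(2) by (simp add: compact_eq_bounded_closed)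
    ultimately show ?thesis
      using conv_c_subset_cseq_if_compact j by blast
  next
    case False
    \<comment> \<open>Here Outrad A is the junk value Inf {}, and A itself makes cseq A j the whole space.\<close>
    have "1 \<le> j"
      using j DIM_positive[where 'a='a] by (cases j) auto
    with False show ?thesis
      using cseq_eq_UNIV_if_unbounded by blast
  qed
  then show "cseq A j = conv_c A"
    using cseq_subset_conv_c by blast
qed

end
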